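(* Let $(p_\lambda(\mathbf y))_{\lambda\in\mathcal P}$ be a full sequence of symmetric functions of binomial type associated with the quasi-genus $G$. Then for all partitions $\lambda$ and $\mu$, with $r=\ell(\mu)$, $$\mathbf D_\mu\,p_\lambda(\mathbf y)=\sum\frac{\lambda!}{\big(\lambda-\alpha^{(1)}-\cdots-\alpha^{(r)}\big)!\,\alpha^{(1)}!\cdots\alpha^{(r)}!}\,G_{\alpha^{(1)}}\cdots G_{\alpha^{(r)}}\;p_{\lambda-\alpha^{(1)}-\cdots-\alpha^{(r)}}(\mathbf y).$$ The sum runs over all tuples $(\alpha^{(1)},\dots,\alpha^{(r)})$ of vectors in $\mathbb Z_{\ge0}^{\ell(\lambda)}$ such that $|\alpha^{(i)}|=\mu_i$ for each $i$ and $\alpha^{(1)}+\cdots+\alpha^{(r)}\le\lambda$ componentwise.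
   Context: **Derivatives.** $\mathbf D_n$ is the linear operator on symmetric functions with $\mathbf D_nm_\nu=n!\,m_{\nu\setminus n}$ if $n$ is a part of $\nu$ (one part removed), and $0$ otherwise. For a partition $\mu$, $\mathbf D_\mu=\prod_{i=1}^{\ell(\mu)}\mathbf D_{\mu_i}/\mu_i!$. **Full sequence.** Partitions of $n$ are ordered by Macdonald's reverse lexicographic order. A full sequence is a family $(p_\lambda)_{\lambda\in\mathcal P}$ of homogeneous symmetric functions in $\mathbf y=(y_1,y_2,\dots)$ such that the largest partition with nonzero coefficient in the monomial expansion of $p_\lambda$ is $\lambda$. **Vector conventions.** For a finitely supported vector $\alpha$ of nonnegative integers, $p_\alpha$ and $G_\alpha$ mean the value at the sorted partition. We write $\alpha!=\prod\alpha_i!$, $|\alpha|=\sum\alpha_i$, and $\binom{\lambda}{\alpha}=\lambda!/(\alpha!(\lambda-\alpha)!)$. **Binomial type.** $(p_\lambda)$ is of binomial type if $p_\lambda(\mathbf y\cup\mathbf z)=\sum_{0\le\alpha\le\lambda}\binom{\lambda}{\alpha}p_\alpha(\mathbf y)p_{\lambda-\alpha}(\mathbf z)$ for disjoint variable sets. **Quasi-genus.** A quasi-genus is an assignment $\lambda\mapsto G_\lambda\in\mathbb C$ with $G_\emptyset=1$. **Association.** $(p_\lambda)$ is associated with $G$ if $$p_\lambda(\mathbf y)=\sum\frac{\lambda!}{\prod_j\alpha^{(j)}!}\prod_{j\ge1}G_{\alpha^{(j)}}y_j^{|\alpha^{(j)}|},$$ summed over families $(\alpha^{(j)})_{j\ge1}$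 of vectors in $\mathbb Z_{\ge0}^{\ell(\lambda)}$, almost all zero, with $\sum_j\alpha^{(j)}=\lambda$. *)

theory Defs
  imports Complex_Main "HOL-Library.Multiset"
begin

text \<open>A symmetric function
  is represented by its coefficients in the monomial basis: f \<nu> is the coefficient
  of the monomial symmetric function m_\<nu>.\<close>

type_synonym partition = "nat multiset"
type_synonym symfun = "partition \<Rightarrow> complex"

definition is_partition :: "partition \<Rightarrow> bool" where
  "is_partition \<nu> \<longleftrightarrow> 0 \<notin># \<nu>"

definition parts :: "partition \<Rightarrow> nat list" where
  "parts \<nu> = rev (sorted_list_of_multiset \<nu>)"

definition part_len :: "partition \<Rightarrow> nat" where
  "part_len \<nu> = size \<nu>"

definition vec_part :: "nat list \<Rightarrow> partition" where
  "vec_part \<alpha> = mset (filter (\<lambda>x. 0 < x) \<alpha>)"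

definition vfact :: "nat list \<Rightarrow> complex" where
  "vfact \<alpha> = (\<Prod>x\<leftarrow>\<alpha>. of_nat (fact x))"

definition homogeneous_symfun :: "symfun \<Rightarrow> bool" where
  "homogeneous_symfun f \<longleftrightarrow>
     (\<forall>\<nu>. f \<nu> \<noteq> 0 \<longrightarrow> is_partition \<nu>) \<and> (\<exists>d. \<forall>\<nu>. f \<nu> \<noteq> 0 \<longrightarrow> sum_mset \<nu> = d)"

definition part_fun :: "partition \<Rightarrow> nat \<Rightarrow> nat" where
  "part_fun \<nu> i = (if i < length (parts \<nu>) then parts \<nu> ! i else 0)"

definition revlex_gt :: "partition \<Rightarrow> partition \<Rightarrow> bool" where
  "revlex_gt \<nu> \<kappa> \<longleftrightarrow> (\<exists>i. (\<forall>j<i. part_fun \<nu> j = part_fun \<kappa> j) \<and> part_fun \<nu> i > part_fun \<kappa> i)"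

definition full_sequence :: "(partition \<Rightarrow> symfun) \<Rightarrow> bool" where
  "full_sequence p \<longleftrightarrow> (\<forall>lm. is_partition lm \<longrightarrow>
      homogeneous_symfun (p lm) \<and> p lm lm \<noteq> 0 \<and>
      (\<forall>\<nu>. p lm \<nu> \<noteq> 0 \<longrightarrow> \<not> revlex_gt \<nu> lm))"

text \<open>Binomial type, read off on the coefficient of m_\<rho>(y) m_\<sigma>(z): the monomial
  y^\<rho> z^\<sigma> in p_\<lambda>(y \<union> z) has coefficient p_\<lambda>[\<rho>+\<sigma>].\<close>
definition binomial_type :: "(partition \<Rightarrow> symfun) \<Rightarrow> bool" where
  "binomial_type p \<longleftrightarrow> (\<forall>lm \<rho> \<sigma>. is_partition lm \<longrightarrow> is_partition \<rho> \<longrightarrow> is_partition \<sigma> \<longrightarrow>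
     (let lam = parts lm; l = length lam in
      p lm (\<rho> + \<sigma>) =
       (\<Sum>\<alpha>\<in>{\<alpha>. length \<alpha> = l \<and> (\<forall>k<l. \<alpha> ! k \<le> lam ! k)}.
          (vfact lam / (vfact \<alpha> * vfact (map (\<lambda>k. lam ! k - \<alpha> ! k) [0..<l])))
          * p (vec_part \<alpha>) \<rho> * p (vec_part (map (\<lambda>k. lam ! k - \<alpha> ! k) [0..<l])) \<sigma>)))"

definition quasi_genus :: "(partition \<Rightarrow> complex) \<Rightarrow> bool" where
  "quasi_genus G \<longleftrightarrow> G {#} = 1"

text \<open>Association: the coefficient of y^\<nu> = y_1^{\<nu>_1} ... y_m^{\<nu>_m} in the defining
  series (families with index j > m are necessarily zero).\<close>
definition associated :: "(partition \<Rightarrow> symfun) \<Rightarrow> (partition \<Rightarrow> complex) \<Rightarrow> bool" where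
  "associated p G \<longleftrightarrow> (\<forall>lm \<nu>. is_partition lm \<longrightarrow> is_partition \<nu> \<longrightarrow>
     (let lam = parts lm; l = length lam; nu = parts \<nu>; m = length nu in
      p lm \<nu> =
       (\<Sum>as\<in>{as. length as = m \<and> (\<forall>j<m. length (as ! j) = l \<and> sum_list (as ! j) = nu ! j)
                   \<and> (\<forall>k<l. (\<Sum>j<m. as ! j ! k) = lam ! k)}.
          vfact lam / (\<Prod>j<m. vfact (as ! j)) * (\<Prod>j<m. G (vec_part (as ! j))))))"

text \<open>The derivative D_n: D_n m_\<nu> = n! m_{\<nu>\<setminus>n} if n is a part of \<nu>, else 0.
  On coefficients: (D_n f)[\<kappa>] = n! f[\<kappa> + {n}].\<close>
definition Dn :: "nat \<Rightarrow> symfun \<Rightarrow> symfun" where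
  "Dn n f = (\<lambda>\<kappa>. of_nat (fact n) * f (\<kappa> + {#n#}))"

fun Dlist :: "nat list \<Rightarrow> symfun \<Rightarrow> symfun" where
  "Dlist [] f = f"
| "Dlist (n # ns) f = (\<lambda>\<kappa>. Dn n (Dlist ns f) \<kappa> / of_nat (fact n))"

definition Dmu :: "partition \<Rightarrow> symfun \<Rightarrow> symfun" where
  "Dmu \<mu> f = Dlist (parts \<mu>) f"

end

(*
  D_n only shifts monomial coefficients, so the coefficient of m_kappa in D_mu p_lambda is the
  coefficient of m_(kappa + mu) in p_lambda. The binomial property, read off at m_mu(y) m_kappa(z),
  writes it as a sum over alpha <= lambda of lambda!/(alpha! (lambda - alpha)!) times
  [m_mu] p_alpha times [m_kappa] p_(lambda - alpha); by association, [m_mu] p_alpha is a sum over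
  families alpha^(1), ..., alpha^(r) with |alpha^(i)| = mu_i and sum alpha. Regrouping the double
  sum by families gives the claim, the factor alpha! cancelling.

  The only technical point is that association indexes the families by the parts of the sorted
  partition of alpha, whereas the binomial formula produces alpha as a vector indexed like lambda.
  Both sums agree: a summand depends on each row only through its multiset of nonzero entries, and
  pulling rows back along the embedding of the sorted nonzero parts into the positions of alpha is
  a bijection of families.

  Of the hypotheses on p, only homogeneity (coefficients vanish off partitions) is used from the
  full-sequence property, and the normalisation G {#} = 1 is not needed.
*)

theory Submission
  imports Defs "HOL-Combinatorics.List_Permutation"
begin

definition vectors_below :: "nat list \<Rightarrow> nat list set" where
  "vectors_below lam = {\<alpha>. length \<alpha> = length lam \<and> (\<forall>k<length lam. \<alpha> ! k \<le> lam ! k)}"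

definition vec_diff :: "nat list \<Rightarrow> nat list \<Rightarrow> nat list" where
  "vec_diff lam \<alpha> = map (\<lambda>k. lam ! k - \<alpha> ! k) [0..<length lam]"

definition families :: "nat list \<Rightarrow> nat list \<Rightarrow> nat list list set" where
  "families nu v = {as. length as = length nu
      \<and> (\<forall>j<length nu. length (as ! j) = length v \<and> sum_list (as ! j) = nu ! j)
      \<and> (\<forall>k<length v. (\<Sum>j<length nu. as ! j ! k) = v ! k)}"

definition families_below :: "nat list \<Rightarrow> nat list \<Rightarrow> nat list list set" where
  "families_below nu lam = {as. length as = length nu
      \<and> (\<forall>j<length nu. length (as ! j) = length lam \<and> sum_list (as ! j) = nu ! j)
      \<and> (\<forall>k<length lam. (\<Sum>j<length nu. as ! j ! k) \<le> lam ! k)}"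

definition remaining :: "nat list \<Rightarrow> nat list list \<Rightarrow> nat list" where
  "remaining lam as = map (\<lambda>k. lam ! k - (\<Sum>j<length as. as ! j ! k)) [0..<length lam]"

definition family_weight :: "(partition \<Rightarrow> complex) \<Rightarrow> nat list list \<Rightarrow> complex" where
  "family_weight G as = (\<Prod>a\<leftarrow>as. G (vec_part a) / vfact a)"

(* The association formula for the coefficient of m_nu in p_v, read for an arbitrary vector v
   instead of the sorted partition of v. *)
definition assoc_coeff :: "(partition \<Rightarrow> complex) \<Rightarrow> nat list \<Rightarrow> nat list \<Rightarrow> complex" where
  "assoc_coeff G nu v = (\<Sum>as\<in>families nu v. vfact v * family_weight G as)"

lemma vfact_nonzero: "vfact a \<noteq> 0"
  unfolding vfact_def by (induction a) simp_all

lemma is_partition_vec_part: "is_partition (vec_part a)"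
  by (simp add: is_partition_def vec_part_def)

lemma mset_parts [simp]: "mset (parts \<nu>) = \<nu>"
  by (simp add: parts_def)

lemma vec_part_eq_sum_list: "vec_part a = (\<Sum>x\<leftarrow>a. if 0 < x then {#x#} else {#})"
  unfolding vec_part_def by (induction a) auto

lemma sum_list_eq_sum_mset_vec_part: "sum_list a = \<Sum>\<^sub># (vec_part a)"
  unfolding vec_part_def by (induction a) auto

lemma vfact_eq_prod_vec_part: "vfact a = (\<Prod>x\<in>#vec_part a. of_nat (fact x))"
  unfolding vfact_def vec_part_def by (induction a) auto

lemma family_weight_eq:
  "length as = m \<Longrightarrow>
    family_weight G as = (\<Prod>j<m. G (vec_part (as ! j))) / (\<Prod>j<m. vfact (as ! j))"
  by (simp add: family_weight_def prod.list_conv_set_nth atLeast0LessThan prod_dividef)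

lemma Dlist_apply: "Dlist ns f \<kappa> = f (\<kappa> + mset ns)"
  by (induction ns arbitrary: \<kappa>) (simp_all add: Dn_def add_ac)

lemma Dmu_apply: "Dmu \<mu> f \<kappa> = f (\<kappa> + \<mu>)"
  by (simp add: Dmu_def Dlist_apply)

lemma homogeneous_symfun_eq_0: "homogeneous_symfun f \<Longrightarrow> \<not> is_partition \<nu> \<Longrightarrow> f \<nu> = 0"
  by (auto simp: homogeneous_symfun_def)

lemma families_row_below:
  assumes as: "as \<in> families nu v" and "a \<in> set as"
  shows "a \<in> vectors_below v"
proof -
  obtain j where j: "j < length nu" and a: "a = as ! j"
    using assms by (auto simp: families_def in_set_conv_nth)
  have "as ! j ! k \<le> v ! k" if "k < length v" for k
  proof -
    have "as ! j ! k \<le> (\<Sum>i<length nu. as ! i ! k)"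
      using j by (intro member_le_sum) auto
    then show ?thesis using as that by (simp add: families_def)
  qed
  then show ?thesis using as j by (simp add: a families_def vectors_below_def)
qed

lemma finite_vectors_below: "finite (vectors_below lam)"
proof (rule finite_subset)
  have "x \<le> sum_list lam" if \<alpha>: "\<alpha> \<in> vectors_below lam" and x: "x \<in> set \<alpha>" for \<alpha> x
  proof -
    obtain k where k: "k < length lam" and xk: "x = \<alpha> ! k"
      using \<alpha> x by (auto simp: vectors_below_def in_set_conv_nth)
    have "\<alpha> ! k \<le> lam ! k" using \<alpha> k by (simp add: vectors_below_def)
    also have "\<dots> \<le> sum_list lam" using k by (rule elem_le_sum_list)
    finally show ?thesis by (simp add: xk)
  qed
  then show "vectors_below lam \<subseteq> {\<alpha>. set \<alpha> \<subseteq> {..sum_list lam} \<and> length \<alpha> = length lam}"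
    by (auto simp: vectors_below_def)
qed (rule finite_lists_length_eq[OF finite_atMost])

lemma finite_families: "finite (families nu v)"
proof (rule finite_subset)
  show "families nu v \<subseteq> {as. set as \<subseteq> vectors_below v \<and> length as = length nu}"
    using families_row_below by (auto simp: families_def)
qed (rule finite_lists_length_eq[OF finite_vectors_below])

lemma families_disjoint:
  assumes "length \<alpha> = length \<beta>" and "\<alpha> \<noteq> \<beta>"
  shows "families nu \<alpha> \<inter> families nu \<beta> = {}"
  using assms by (auto simp: families_def intro: nth_equalityI)

lemma families_below_eq_UN: "families_below nu lam = (\<Union>\<alpha>\<in>vectors_below lam. families nu \<alpha>)"
proof
  show "families_below nu lam \<subseteq> (\<Union>\<alpha>\<in>vectors_below lam. families nu \<alpha>)"
  proof
    fix as assume as: "as \<in> families_below nu lam"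
    define \<alpha> where "\<alpha> = map (\<lambda>k. \<Sum>j<length nu. as ! j ! k) [0..<length lam]"
    have "\<alpha> \<in> vectors_below lam" "as \<in> families nu \<alpha>"
      using as by (auto simp: \<alpha>_def families_below_def vectors_below_def families_def)
    then show "as \<in> (\<Union>\<alpha>\<in>vectors_below lam. families nu \<alpha>)" by blast
  qed
qed (auto simp: families_below_def vectors_below_def families_def)

lemma sum_families_below:
  "(\<Sum>as\<in>families_below nu lam. f as) = (\<Sum>\<alpha>\<in>vectors_below lam. \<Sum>as\<in>families nu \<alpha>. f as)"
  unfolding families_below_eq_UN
proof (rule sum.UNION_disjoint[OF finite_vectors_below])
  show "\<forall>\<alpha>\<in>vectors_below lam. \<forall>\<beta>\<in>vectors_below lam. \<alpha> \<noteq> \<beta> \<longrightarrow> families nu \<alpha> \<inter> families nu \<beta> = {}"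
    by (auto simp: vectors_below_def intro!: families_disjoint)
qed (simp add: finite_families)

locale index_embedding =
  fixes g :: "nat \<Rightarrow> nat" and m n :: nat
  assumes inj: "inj_on g {..<m}" and maps_into: "g ` {..<m} \<subseteq> {..<n}"
begin

definition pullback :: "nat list \<Rightarrow> nat list" where
  "pullback a = map (\<lambda>k. a ! g k) [0..<m]"

definition pushforward :: "nat list \<Rightarrow> nat list" where
  "pushforward b = map (\<lambda>i. if i \<in> g ` {..<m} then b ! the_inv_into {..<m} g i else 0) [0..<n]"

definition supported :: "nat list \<Rightarrow> bool" where
  "supported a \<longleftrightarrow> length a = n \<and> (\<forall>i<n. i \<notin> g ` {..<m} \<longrightarrow> a ! i = 0)"

lemma length_pullback [simp]: "length (pullback a) = m"
  by (simp add: pullback_def)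

lemma nth_pullback [simp]: "k < m \<Longrightarrow> pullback a ! k = a ! g k"
  by (simp add: pullback_def)

lemma length_pushforward [simp]: "length (pushforward b) = n"
  by (simp add: pushforward_def)

lemma nth_pushforward_image [simp]: "k < m \<Longrightarrow> pushforward b ! g k = b ! k"
  using maps_into by (auto simp: pushforward_def the_inv_into_f_f[OF inj])

lemma nth_pushforward_outside: "i < n \<Longrightarrow> i \<notin> g ` {..<m} \<Longrightarrow> pushforward b ! i = 0"
  by (simp add: pushforward_def)

lemma supported_pushforward: "supported (pushforward b)"
  by (simp add: supported_def nth_pushforward_outside)

lemma pullback_pushforward: "length b = m \<Longrightarrow> pullback (pushforward b) = b"
  by (intro nth_equalityI) simp_all

lemma pushforward_pullback:
  assumes "supported a"
  shows "pushforward (pullback a) = a"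
proof (rule nth_equalityI)
  fix i assume "i < length (pushforward (pullback a))"
  then have "i < n" by simp
  show "pushforward (pullback a) ! i = a ! i"
  proof (cases "i \<in> g ` {..<m}")
    case True
    then show ?thesis by auto
  next
    case False
    with \<open>i < n\<close> assms show ?thesis by (simp add: supported_def nth_pushforward_outside)
  qed
qed (use assms in \<open>simp add: supported_def\<close>)

lemma sum_list_map_pullback:
  fixes f :: "nat \<Rightarrow> 'a::comm_monoid_add"
  assumes "supported a" and "f 0 = 0"
  shows "(\<Sum>x\<leftarrow>pullback a. f x) = (\<Sum>x\<leftarrow>a. f x)"
proof -
  have "(\<Sum>x\<leftarrow>a. f x) = (\<Sum>i<n. f (a ! i))"
    using assms(1) by (simp add: sum.list_conv_set_nth atLeast0LessThan supported_def)
  also have "\<dots> = (\<Sum>i\<in>g ` {..<m}. f (a ! i))"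
    using assms maps_into by (intro sum.mono_neutral_right) (auto simp: supported_def)
  also have "\<dots> = (\<Sum>k<m. f (a ! g k))"
    by (simp add: sum.reindex[OF inj])
  also have "\<dots> = (\<Sum>x\<leftarrow>pullback a. f x)"
    by (simp add: sum.list_conv_set_nth atLeast0LessThan)
  finally show ?thesis ..
qed

lemma vec_part_pullback: "supported a \<Longrightarrow> vec_part (pullback a) = vec_part a"
  by (simp add: vec_part_eq_sum_list sum_list_map_pullback)

lemma sum_list_pullback: "supported a \<Longrightarrow> sum_list (pullback a) = sum_list a"
  by (metis sum_list_eq_sum_mset_vec_part vec_part_pullback)

lemma vfact_pullback: "supported a \<Longrightarrow> vfact (pullback a) = vfact a"
  by (metis vfact_eq_prod_vec_part vec_part_pullback)

lemma supported_family_row: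
  assumes "supported v" and "as \<in> families nu v" and "a \<in> set as"
  shows "supported a"
  using assms families_row_below[OF assms(2,3)]
  by (fastforce simp: supported_def vectors_below_def)

lemma map_pullback_families:
  assumes v: "supported v" and as: "as \<in> families nu v"
  shows "map pullback as \<in> families nu (pullback v)"
proof -
  have len: "length as = length nu" using as by (simp add: families_def)
  have row: "supported (as ! j)" if "j < length nu" for j
    using supported_family_row[OF v as] that len by simp
  have "(\<Sum>j<length nu. pullback (as ! j) ! k) = pullback v ! k" if "k < m" for k
    using as maps_into that v by (auto simp: families_def supported_def)
  then show ?thesis using as row len by (simp add: families_def sum_list_pullback)
qed

lemma map_pushforward_families:
  assumes v: "supported v" and bs: "bs \<in> families nu (pullback v)"
  shows "map pushforward bs \<in> families nu v"
proof -
  have len: "length bs = length nu" using bs by (simp add: families_def)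
  have row_sum: "sum_list (pushforward b) = sum_list b" if "length b = m" for b
    using sum_list_pullback[OF supported_pushforward, of b] pullback_pushforward[OF that] by simp
  have col: "(\<Sum>j<length nu. pushforward (bs ! j) ! i) = v ! i" if "i < n" for i
  proof (cases "i \<in> g ` {..<m}")
    case True
    then obtain k where "k < m" and "i = g k" by auto
    then show ?thesis using bs by (simp add: families_def)
  next
    case False
    then show ?thesis using v that by (simp add: nth_pushforward_outside supported_def)
  qed
  show ?thesis using bs len v col by (simp add: families_def row_sum supported_def)
qed

lemma bij_betw_map_pullback_families:
  assumes "supported v"
  shows "bij_betw (map pullback) (families nu v) (families nu (pullback v))"
proof (rule bij_betw_byWitness[where f' = "map pushforward"])
  show "\<forall>as\<in>families nu v. map pushforward (map pullback as) = as"
    using assms by (auto simp: pushforward_pullback supported_family_row intro: map_idI)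
  have "length b = m" if "bs \<in> families nu (pullback v)" "b \<in> set bs" for bs b
    using families_row_below[OF that] by (simp add: vectors_below_def)
  then show "\<forall>bs\<in>families nu (pullback v). map pullback (map pushforward bs) = bs"
    by (auto simp: pullback_pushforward intro: map_idI)
  show "map pullback ` families nu v \<subseteq> families nu (pullback v)"
    using assms map_pullback_families by blast
  show "map pushforward ` families nu (pullback v) \<subseteq> families nu v"
    using assms map_pushforward_families by blast
qed

lemma assoc_coeff_pullback:
  assumes "supported v"
  shows "assoc_coeff G nu (pullback v) = assoc_coeff G nu v"
proof -
  have weight: "family_weight G (map pullback as) = family_weight G as" if "as \<in> families nu v" for as
    using assms that unfolding family_weight_def map_map
    by (intro arg_cong[where f = prod_list] map_cong)
      (simp_all add: vfact_pullback vec_part_pullback supported_family_row)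
  have "assoc_coeff G nu (pullback v)
      = (\<Sum>as\<in>families nu v. vfact (pullback v) * family_weight G (map pullback as))"
    unfolding assoc_coeff_def
    by (rule sum.reindex_bij_betw[OF bij_betw_map_pullback_families[OF assms], symmetric])
  also have "\<dots> = assoc_coeff G nu v"
    unfolding assoc_coeff_def using assms weight by (simp add: vfact_pullback)
  finally show ?thesis .
qed

end

lemma embedding_onto_nonzero_entries:
  assumes "mset w = vec_part \<alpha>"
  obtains g where "index_embedding g (length w) (length \<alpha>)"
    and "index_embedding.supported g (length w) (length \<alpha>) \<alpha>"
    and "w = index_embedding.pullback g (length w) \<alpha>"
proof -
  define idx where "idx = filter (\<lambda>i. 0 < \<alpha> ! i) [0..<length \<alpha>]"
  have "filter (\<lambda>x. 0 < x) \<alpha> = filter (\<lambda>x. 0 < x) (map (nth \<alpha>) [0..<length \<alpha>])"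
    by (simp add: map_nth)
  also have "\<dots> = map (nth \<alpha>) idx"
    by (simp add: filter_map idx_def comp_def)
  finally have "mset w = mset (map (nth \<alpha>) idx)"
    using assms unfolding vec_part_def by simp
  from permutation_Ex_bij[OF this] obtain f where f: "bij_betw f {..<length w} {..<length idx}"
    and w_f: "\<forall>k<length w. w ! k = map (nth \<alpha>) idx ! f k"
    by (auto simp only: length_map)
  define g where "g = (\<lambda>k. idx ! f k)"
  have w_g: "w ! k = \<alpha> ! g k" if "k < length w" for k
  proof -
    have "f k < length idx" using f that by (auto simp: bij_betw_def)
    then show ?thesis using w_f that by (simp add: g_def)
  qed
  have img: "g ` {..<length w} = set idx"
    using f nth_image[of "length idx" idx] unfolding g_def bij_betw_def
    by (simp add: image_image[symmetric] lessThan_atLeast0)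
  have "inj_on (nth idx) {..<length idx}"
    by (rule inj_on_nth) (auto simp: idx_def)
  then have "inj_on g {..<length w}"
    using f unfolding g_def bij_betw_def by (simp add: comp_inj_on[unfolded comp_def])
  then interpret index_embedding g "length w" "length \<alpha>"
    using img by unfold_locales (auto simp: idx_def)
  have "supported \<alpha>" using img by (auto simp: supported_def idx_def)
  moreover have "w = pullback \<alpha>"
    using w_g by (intro nth_equalityI) simp_all
  ultimately show thesis using that index_embedding_axioms by blast
qed

lemma assoc_coeff_parts_vec_part: "assoc_coeff G nu (parts (vec_part \<alpha>)) = assoc_coeff G nu \<alpha>"
proof -
  obtain g where "index_embedding g (length (parts (vec_part \<alpha>))) (length \<alpha>)"
    and "index_embedding.supported g (length (parts (vec_part \<alpha>))) (length \<alpha>) \<alpha>"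
    and "parts (vec_part \<alpha>) = index_embedding.pullback g (length (parts (vec_part \<alpha>))) \<alpha>"
    by (rule embedding_onto_nonzero_entries[OF mset_parts])
  then show ?thesis by (metis index_embedding.assoc_coeff_pullback)
qed

lemma binomial_typeD:
  assumes "binomial_type p" and "is_partition lm" "is_partition \<rho>" "is_partition \<sigma>"
  shows "p lm (\<rho> + \<sigma>) = (\<Sum>\<alpha>\<in>vectors_below (parts lm).
    vfact (parts lm) / (vfact \<alpha> * vfact (vec_diff (parts lm) \<alpha>))
    * p (vec_part \<alpha>) \<rho> * p (vec_part (vec_diff (parts lm) \<alpha>)) \<sigma>)"
  using assms unfolding binomial_type_def vectors_below_def vec_diff_def Let_def by blast

lemma associatedD:
  assumes "associated p G" and "is_partition lm" "is_partition \<nu>"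
  shows "p lm \<nu> = assoc_coeff G (parts \<nu>) (parts lm)"
proof -
  have "p lm \<nu> = (\<Sum>as\<in>families (parts \<nu>) (parts lm). vfact (parts lm)
      / (\<Prod>j<length (parts \<nu>). vfact (as ! j)) * (\<Prod>j<length (parts \<nu>). G (vec_part (as ! j))))"
    using assms unfolding associated_def families_def Let_def by blast
  also have "\<dots> = assoc_coeff G (parts \<nu>) (parts lm)"
    unfolding assoc_coeff_def by (intro sum.cong refl) (simp add: families_def family_weight_eq)
  finally show ?thesis .
qed

lemma associated_vec_part:
  assumes "associated p G" and "is_partition \<nu>"
  shows "p (vec_part \<alpha>) \<nu> = assoc_coeff G (parts \<nu>) \<alpha>"
  using associatedD[OF assms(1) is_partition_vec_part assms(2)]
  by (simp add: assoc_coeff_parts_vec_part)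

lemma remaining_eq_vec_diff:
  assumes "as \<in> families nu \<alpha>" and "length \<alpha> = length lam"
  shows "remaining lam as = vec_diff lam \<alpha>"
  using assms by (simp add: remaining_def vec_diff_def families_def)

lemma binomial_associated_expansion:
  assumes "binomial_type p" and "associated p G"
    and "is_partition lm" "is_partition \<rho>" "is_partition \<kappa>"
  shows "p lm (\<rho> + \<kappa>) = (\<Sum>as\<in>families_below (parts \<rho>) (parts lm).
    vfact (parts lm) / vfact (remaining (parts lm) as) * family_weight G as
    * p (vec_part (remaining (parts lm) as)) \<kappa>)"
    (is "_ = (\<Sum>as\<in>_. ?term as)")
proof -
  let ?lam = "parts lm" and ?nu = "parts \<rho>"
  have "p lm (\<rho> + \<kappa>) = (\<Sum>\<alpha>\<in>vectors_below ?lam. vfact ?lam / (vfact \<alpha> * vfact (vec_diff ?lam \<alpha>))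
      * p (vec_part \<alpha>) \<rho> * p (vec_part (vec_diff ?lam \<alpha>)) \<kappa>)"
    using assms(1,3-5) by (rule binomial_typeD)
  also have "\<dots> = (\<Sum>\<alpha>\<in>vectors_below ?lam. \<Sum>as\<in>families ?nu \<alpha>. ?term as)"
  proof (rule sum.cong[OF refl])
    fix \<alpha> assume "\<alpha> \<in> vectors_below ?lam"
    then have len: "length \<alpha> = length ?lam" by (simp add: vectors_below_def)
    let ?c = "vfact ?lam / (vfact \<alpha> * vfact (vec_diff ?lam \<alpha>))"
      and ?q = "p (vec_part (vec_diff ?lam \<alpha>)) \<kappa>"
    have "?c * p (vec_part \<alpha>) \<rho> * ?q
        = (\<Sum>as\<in>families ?nu \<alpha>. ?c * (vfact \<alpha> * family_weight G as) * ?q)"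
      by (simp add: associated_vec_part[OF assms(2,4)] assoc_coeff_def sum_distrib_left sum_distrib_right)
    also have "\<dots> = (\<Sum>as\<in>families ?nu \<alpha>. ?term as)"
      using len vfact_nonzero[of \<alpha>] by (intro sum.cong refl) (simp add: remaining_eq_vec_diff)
    finally show "?c * p (vec_part \<alpha>) \<rho> * ?q = (\<Sum>as\<in>families ?nu \<alpha>. ?term as)" .
  qed
  also have "\<dots> = (\<Sum>as\<in>families_below ?nu ?lam. ?term as)"
    by (rule sum_families_below[symmetric])
  finally show ?thesis .
qed

theorem mainTheorem15:
  fixes p :: "partition \<Rightarrow> symfun" and G :: "partition \<Rightarrow> complex"
    and la mu0 :: partition
  assumes "full_sequence p" and "binomial_type p"
    and "quasi_genus G" and "associated p G"
    and "is_partition la" and "is_partition mu0"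
  shows "Dmu mu0 (p la) =
    (let lam = parts la; l = length lam; mu = parts mu0; r = length mu in
     (\<lambda>\<kappa>. \<Sum>as\<in>{as. length as = r \<and> (\<forall>i<r. length (as ! i) = l \<and> sum_list (as ! i) = mu ! i)
                    \<and> (\<forall>k<l. (\<Sum>i<r. as ! i ! k) \<le> lam ! k)}.
        (let rest = map (\<lambda>k. lam ! k - (\<Sum>i<r. as ! i ! k)) [0..<l] in
         vfact lam / (vfact rest * (\<Prod>i<r. vfact (as ! i)))
         * (\<Prod>i<r. G (vec_part (as ! i))) * p (vec_part rest) \<kappa>)))"
proof -
  let ?lam = "parts la" and ?mu = "parts mu0"
  let ?term = "\<lambda>\<kappa> as. vfact ?lam / vfact (remaining ?lam as) * family_weight G as
    * p (vec_part (remaining ?lam as)) \<kappa>"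
  have expansion: "Dmu mu0 (p la) \<kappa> = (\<Sum>as\<in>families_below ?mu ?lam. ?term \<kappa> as)" for \<kappa>
  proof (cases "is_partition \<kappa>")
    case True
    then show ?thesis
      using binomial_associated_expansion[OF assms(2,4,5,6) True] by (simp add: Dmu_apply add.commute)
  next
    case False
    have "homogeneous_symfun (p lm)" if "is_partition lm" for lm
      using assms(1) that by (simp add: full_sequence_def)
    moreover have "\<not> is_partition (\<kappa> + mu0)" using False by (simp add: is_partition_def)
    ultimately show ?thesis
      using False assms(5) by (simp add: Dmu_apply homogeneous_symfun_eq_0 is_partition_vec_part)
  qed
  have term_eq: "?term \<kappa> as = vfact ?lam
      / (vfact (map (\<lambda>k. ?lam ! k - (\<Sum>i<length ?mu. as ! i ! k)) [0..<length ?lam])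
        * (\<Prod>i<length ?mu. vfact (as ! i)))
      * (\<Prod>i<length ?mu. G (vec_part (as ! i)))
      * p (vec_part (map (\<lambda>k. ?lam ! k - (\<Sum>i<length ?mu. as ! i ! k)) [0..<length ?lam])) \<kappa>"
    if "as \<in> families_below ?mu ?lam" for as \<kappa>
    using that by (simp add: families_below_def remaining_def family_weight_eq vfact_nonzero)
  show ?thesis
    unfolding Let_def families_below_def[symmetric]
    by (rule ext, unfold expansion, rule sum.cong[OF refl], rule term_eq)
qed

end
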